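(* Let Assumptions (A1), (A3) and (A4) below hold and let $\alpha\in\mathcal K_\infty$. Then there exist $\delta\in\mathcal L$ and $N_0\in\mathbb{N}$ such that for all $x\in\mathbb{X}_{\alpha,N_0}$ and all $N\ge N_0$: $$V_{N+1}^\beta(x)\le\tfrac{N}{N+1}V_N^\beta(x)+\ell^\star+\delta(N+1),$$ and, with $x_1=x_{\mu_N^\beta}(1,x)=f(x,\mu_N^\beta(x))$, $$V_N^\beta(x_1)\le V_N^\beta(x)+\tfrac{N+1}{N}\big(\ell^\star-\ell(x,\mu_N^\beta(x))+\delta(N+1)\big).$$
   Context: System $x(k+1)=f(x(k),u(k))$ with constraint sets $\mathbb{X}\subset\mathbb{R}^n$, $\mathbb{U}\subset\mathbb{R}^m$ and stage cost $\ell:\mathbb{X}\times\mathbb{U}\to\mathbb{R}$, which is assumed non-negative. For $u\in\mathbb{U}^T$, $x_u(0,x)=x$, $x_u(k+1,x)=f(x_u(k,x),u(k))$; $\mathbb{U}^T(x)$ is the set of $u\in\mathbb{U}^T$ with $x_u(k,x)\in\mathbb{X}$ for $k=0,\dots,T$. A feasible $p$-periodic orbit is $\Pi\in(\mathbb{X}\times\mathbb{U})^p$ with $\Pi_\mathbb{X}([k+1]_p)=f(\Pi(k))$ ($[k]_p$ = $k$ mod $p$); $\|(x,u)\|_\Pi:=\min_k\|(x,u)-\Pi(k)\|$, $\|x\|_{\Pi_\mathbb{X}}:=\min_k\|x-\Pi_\mathbb{X}(k)\|$; $\ell^\star:=\inf$ over all feasible periodic orbits of $\frac1p\sum_{k=0}^{p-1}\ell(\Pi(k))$;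 $\Pi^\star$ is a fixed feasible $p^\star$-periodic orbit attaining $\ell^\star$. $\mathcal L$: continuous decreasing functions $[0,\infty)\to[0,\infty)$ tending to $0$. (A1) $f,\ell$ continuous, $\mathbb{X},\mathbb{U}$ compact. (A3) There are $\lambda:\mathbb{X}\to\mathbb{R}$, $\bar\lambda$ with $|\lambda|\le\bar\lambda$ on $\mathbb{X}$, and $\underline\alpha_{\tilde\ell}\in\mathcal K_\infty$ with $\ell(x,u)-\ell^\star+\lambda(x)-\lambda(f(x,u))\ge\underline\alpha_{\tilde\ell}(\|(x,u)\|_{\Pi^\star})$ for all $x\in\mathbb{X}$, $u\in\mathbb{U}^1(x)$. (A4) There are $\kappa>0$, $M'\in\mathbb{N}$, $\rho\in\mathcal K_\infty$ such that for all $z\in\{\Pi^\star_\mathbb{X}(k)\}$ and $x,y\in\mathbb{X}$ with $\|x-z\|,\|y-z\|\le\kappa$ there is $u\in\mathbb{U}^{M'}(x)$ with $x_u(M',x)=y$ and $\|(x_u(k,x),u(k))\|_{\Pi^\star}\le\rho(\max\{\|x\|_{\Pi^\star_\mathbb{X}},\|y\|_{\Pi^\star_\mathbb{X}}\})$ for $k=0,\dots,M'-1$. Discounted MPC: $\beta_N(k)=\frac{N-k}{N}$, $J_N^\beta(x,u)=\sum_{k=0}^{N-1}\beta_N(k)\ell(x_u(k,x),u(k))$, $V_N^\beta(x)=\inf_{u\in\mathbb{U}^N(x)}J_N^\beta(x,u)$, $u^\beta_{N,x}$ a minimizer, $\mu_N^\beta(x)=u^\beta_{N,x}(0)$. Weak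 turnpike: $Q^\beta_\varepsilon(N,x)$ is the number of $k\in\{0,\dots,N-1\}$ with $\|(x_{u^\beta_{N,x}}(k,x),u^\beta_{N,x}(k))\|_{\Pi^\star}\le\varepsilon$; $\mathbb{X}_{\alpha,N_0}$ is the set of $x\in\mathbb{X}$ with $Q^\beta_\varepsilon(N,x)\ge N-\sqrt N/\alpha(\varepsilon)$ for all $N\ge N_0$, $\varepsilon>0$. *)

theory Defs
  imports "HOL-Analysis.Analysis"
begin

definition Kinf :: "(real \<Rightarrow> real) \<Rightarrow> bool" where
  "Kinf a \<longleftrightarrow> continuous_on {0..} a \<and> a 0 = 0 \<and> strict_mono_on {0..} a
     \<and> filterlim a at_top at_top"

definition classL :: "(real \<Rightarrow> real) \<Rightarrow> bool" where
  "classL d \<longleftrightarrow> continuous_on {0..} d \<and> (\<forall>t\<ge>0. d t \<ge> 0)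
     \<and> (\<forall>s t. 0 \<le> s \<longrightarrow> s \<le> t \<longrightarrow> d t \<le> d s) \<and> (d \<longlongrightarrow> 0) at_top"

fun traj :: "('x \<Rightarrow> 'u \<Rightarrow> 'x) \<Rightarrow> 'x \<Rightarrow> (nat \<Rightarrow> 'u) \<Rightarrow> nat \<Rightarrow> 'x" where
  "traj f x u 0 = x"
| "traj f x u (Suc k) = f (traj f x u k) (u k)"

definition admissible :: "('x \<Rightarrow> 'u \<Rightarrow> 'x) \<Rightarrow> 'x set \<Rightarrow> 'u set \<Rightarrow> nat \<Rightarrow> 'x \<Rightarrow> (nat \<Rightarrow> 'u) \<Rightarrow> bool" where
  "admissible f X U T x u \<longleftrightarrow> (\<forall>k<T. u k \<in> U) \<and> (\<forall>k\<le>T. traj f x u k \<in> X)"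

definition periodic_orbit :: "('x \<Rightarrow> 'u \<Rightarrow> 'x) \<Rightarrow> 'x set \<Rightarrow> 'u set \<Rightarrow> nat \<Rightarrow> (nat \<Rightarrow> 'x \<times> 'u) \<Rightarrow> bool" where
  "periodic_orbit f X U p P \<longleftrightarrow> p > 0 \<and> (\<forall>k<p. P k \<in> X \<times> U)
     \<and> (\<forall>k<p. fst (P (Suc k mod p)) = f (fst (P k)) (snd (P k)))"

definition avg_cost :: "('x \<Rightarrow> 'u \<Rightarrow> real) \<Rightarrow> nat \<Rightarrow> (nat \<Rightarrow> 'x \<times> 'u) \<Rightarrow> real" where
  "avg_cost l p P = (\<Sum>k<p. case_prod l (P k)) / real p"

definition ell_star :: "('x \<Rightarrow> 'u \<Rightarrow> 'x) \<Rightarrow> 'x set \<Rightarrow> 'u set \<Rightarrow> ('x \<Rightarrow> 'u \<Rightarrow> real) \<Rightarrow> real" where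
  "ell_star f X U l = Inf {avg_cost l p P | p P. periodic_orbit f X U p P}"

definition orbit_dist :: "nat \<Rightarrow> (nat \<Rightarrow> 'x::real_normed_vector \<times> 'u::real_normed_vector) \<Rightarrow> 'x \<times> 'u \<Rightarrow> real" where
  "orbit_dist p P z = Min ((\<lambda>k. norm (z - P k)) ` {..<p})"

definition orbit_state_dist :: "nat \<Rightarrow> (nat \<Rightarrow> 'x::real_normed_vector \<times> 'u) \<Rightarrow> 'x \<Rightarrow> real" where
  "orbit_state_dist p P x = Min ((\<lambda>k. norm (x - fst (P k))) ` {..<p})"

definition Jbeta :: "('x \<Rightarrow> 'u \<Rightarrow> 'x) \<Rightarrow> ('x \<Rightarrow> 'u \<Rightarrow> real) \<Rightarrow> nat \<Rightarrow> 'x \<Rightarrow> (nat \<Rightarrow> 'u) \<Rightarrow> real" where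
  "Jbeta f l N x u = (\<Sum>k<N. (real (N - k) / real N) * l (traj f x u k) (u k))"

text \<open>Optimal value V_N^beta, as an extended real (infimum over the empty set is +infinity).\<close>
definition Vbeta :: "('x \<Rightarrow> 'u \<Rightarrow> 'x) \<Rightarrow> 'x set \<Rightarrow> 'u set \<Rightarrow> ('x \<Rightarrow> 'u \<Rightarrow> real) \<Rightarrow> nat \<Rightarrow> 'x \<Rightarrow> ereal" where
  "Vbeta f X U l N x = (INF u\<in>{u. admissible f X U N x u}. ereal (Jbeta f l N x u))"

definition Qcount :: "('x::real_normed_vector \<Rightarrow> 'u::real_normed_vector \<Rightarrow> 'x) \<Rightarrow> (nat \<Rightarrow> 'x \<Rightarrow> nat \<Rightarrow> 'u)
    \<Rightarrow> nat \<Rightarrow> (nat \<Rightarrow> 'x \<times> 'u) \<Rightarrow> real \<Rightarrow> nat \<Rightarrow> 'x \<Rightarrow> nat" where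
  "Qcount f uopt p P eps N x =
     card {k. k < N \<and> orbit_dist p P (traj f x (uopt N x) k, uopt N x k) \<le> eps}"

text \<open>The set X_{alpha,N0}; membership also requires U^N(x) nonempty for N >= N0, so that the
  minimizer uopt N x is an actual minimizer.\<close>
definition Xturn :: "('x::real_normed_vector \<Rightarrow> 'u::real_normed_vector \<Rightarrow> 'x) \<Rightarrow> 'x set \<Rightarrow> 'u set
    \<Rightarrow> (nat \<Rightarrow> 'x \<Rightarrow> nat \<Rightarrow> 'u) \<Rightarrow> nat \<Rightarrow> (nat \<Rightarrow> 'x \<times> 'u) \<Rightarrow> (real \<Rightarrow> real) \<Rightarrow> nat \<Rightarrow> 'x set" where
  "Xturn f X U uopt p P a N0 = {x \<in> X. \<forall>N\<ge>N0. (\<exists>u. admissible f X U N x u) \<and>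
      (\<forall>eps>0. real (Qcount f uopt p P eps N x) \<ge> real N - sqrt (real N) / a eps)}"

end

(* Dissipativity turns the stage cost into a rotated cost l - l* whose partial sums along any
   admissible trajectory are bounded below by -2 lbar, and the weighted cost N J_N^beta is the sum
   of the partial sums of the stage costs.  Let x satisfy the turnpike estimate.  Then the optimal
   trajectory of horizon N passes near the optimal orbit at some time k0 = O(sqrt N) and at some
   time k with N - k of order sqrt N.  Steering onto the orbit at k0 gives a competitor, so by
   optimality the rotated cost accumulated between k0 and k is O(sqrt N).  Steering onto the orbit
   at k and then following it gives an admissible control of horizon N + 1 whose weighted cost
   exceeds N V_N^beta(x) + (N + 1) l* by O(sqrt N), i.e. by (N + 1) delta(N + 1) with
   delta(t) = K / sqrt (t + 1).  Both inequalities follow from this control, the second one from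
   its shift by one step.  Only the dissipation inequality (not its strictness), boundedness of l
   and steerability onto the orbit are needed. *)
theory Submission
  imports Defs
begin

section \<open>Sums of partial sums\<close>

definition ramp_sum :: "nat \<Rightarrow> (nat \<Rightarrow> real) \<Rightarrow> real" where
  "ramp_sum N c = (\<Sum>i<N. real (N - i) * c i)"

lemma ramp_sum_Suc: "ramp_sum (Suc N) c = ramp_sum N c + sum c {..N}"
proof -
  have "ramp_sum (Suc N) c = (\<Sum>i<Suc N. real (N - i) * c i + c i)"
    unfolding ramp_sum_def by (intro sum.cong) (auto simp: Suc_diff_le algebra_simps)
  also have "\<dots> = (\<Sum>i<Suc N. real (N - i) * c i) + sum c {..N}"
    by (simp add: sum.distrib lessThan_Suc_atMost)
  finally show ?thesis
    by (simp add: ramp_sum_def)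
qed

lemma ramp_sum_eq_sum_partial_sums: "ramp_sum N c = (\<Sum>m<N. sum c {..m})"
proof (induction N)
  case 0
  show ?case by (simp add: ramp_sum_def)
next
  case (Suc N)
  then show ?case by (simp add: ramp_sum_Suc)
qed

lemma ramp_sum_Suc_shift: "ramp_sum (Suc N) c = real (Suc N) * c 0 + ramp_sum N (\<lambda>i. c (Suc i))"
  by (simp only: ramp_sum_def sum.lessThan_Suc_shift) simp

lemma ramp_sum_diff_const: "ramp_sum N (\<lambda>i. c i - e) = ramp_sum N c - e * ramp_sum N (\<lambda>_. 1)"
  unfolding ramp_sum_def sum_distrib_left sum_subtractf[symmetric]
  by (intro sum.cong) (auto simp: algebra_simps)

lemma sum_atMost_split: "(k::nat) \<le> m \<Longrightarrow> sum c {..m} = sum c {..<k} + sum c {k..m}"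
  by (subst ivl_disj_un_one(4)[symmetric, of k m]) (auto intro: sum.union_disjoint)

lemma ramp_sum_split:
  assumes "k \<le> N"
  shows "ramp_sum N c = (\<Sum>m<k. sum c {..m}) + real (N - k) * sum c {..<k} + (\<Sum>m\<in>{k..<N}. sum c {k..m})"
proof -
  have "(\<Sum>m\<in>{k..<N}. sum c {..m}) = (\<Sum>m\<in>{k..<N}. sum c {..<k} + sum c {k..m})"
    by (intro sum.cong refl) (simp add: sum_atMost_split)
  then show ?thesis
    using assms sum.atLeastLessThan_concat[of 0 k N "\<lambda>m. sum c {..m}"]
    by (simp add: ramp_sum_eq_sum_partial_sums atLeast0LessThan sum.distrib)
qed

lemma sum_partial_sums_cong:
  fixes k :: nat
  assumes "\<And>i. i < k \<Longrightarrow> c i = d i"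
  shows "(\<Sum>m<k. sum c {..m}) = (\<Sum>m<k. sum d {..m})"
  using assms by (intro sum.cong refl) simp

lemma ramp_sum_le_imp_excursion_bound:
  fixes cu cv :: "nat \<Rightarrow> real"
  assumes "k0 \<le> k" "k \<le> N"
    and agree: "\<And>i. i < k0 \<Longrightarrow> cv i = cu i"
    and tail: "\<And>m. k0 \<le> m \<Longrightarrow> sum cv {k0..m} \<le> B"
    and lower: "\<And>a m. a \<le> m \<Longrightarrow> m < N \<Longrightarrow> - D \<le> sum cu {a..m}"
    and le: "ramp_sum N cu \<le> ramp_sum N cv"
  shows "real (N - k) * sum cu {k0..<k} \<le> real (N - k0) * (B + D)"
proof -
  define E where "E = sum cu {k0..<k}"
  have "sum cv {..<k0} = sum cu {..<k0}"
    using agree by (intro sum.cong) auto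
  then have "(\<Sum>m\<in>{k0..<N}. sum cu {k0..m}) \<le> (\<Sum>m\<in>{k0..<N}. sum cv {k0..m})"
    using le ramp_sum_split[of k0 N cu] ramp_sum_split[of k0 N cv]
      sum_partial_sums_cong[of k0 cv cu] agree assms(1,2) by simp
  also have "\<dots> \<le> real (N - k0) * B"
    using sum_mono[of "{k0..<N}" "\<lambda>m. sum cv {k0..m}" "\<lambda>_. B"] tail by simp
  finally have upper: "(\<Sum>m\<in>{k0..<N}. sum cu {k0..m}) \<le> real (N - k0) * B" .
  have "real (k - k0) * (- D) \<le> (\<Sum>m\<in>{k0..<k}. sum cu {k0..m})"
    using sum_mono[of "{k0..<k}" "\<lambda>_. - D" "\<lambda>m. sum cu {k0..m}"] lower assms(2) by simp
  moreover have "real (N - k) * (E - D) \<le> (\<Sum>m\<in>{k..<N}. sum cu {k0..m})"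
  proof -
    have "sum cu {k0..m} = E + sum cu {k..m}" if "k \<le> m" for m
      using that assms(1) unfolding E_def
      by (subst ivl_disj_un_two(7)[symmetric, of k0 k m]) (auto intro: sum.union_disjoint)
    then show ?thesis
      using sum_mono[of "{k..<N}" "\<lambda>_. E - D" "\<lambda>m. sum cu {k0..m}"] lower by simp
  qed
  moreover have "(\<Sum>m\<in>{k0..<N}. sum cu {k0..m})
      = (\<Sum>m\<in>{k0..<k}. sum cu {k0..m}) + (\<Sum>m\<in>{k..<N}. sum cu {k0..m})"
    using assms(1,2) by (simp add: sum.atLeastLessThan_concat)
  moreover have "real (N - k0) = real (k - k0) + real (N - k)"
    using assms(1,2) by simp
  ultimately show ?thesis
    using upper unfolding E_def by (simp add: algebra_simps)
qed

lemma ramp_sum_Suc_le_of_tail: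
  fixes cu cw :: "nat \<Rightarrow> real"
  assumes "k \<le> N"
    and agree: "\<And>i. i < k \<Longrightarrow> cw i = cu i"
    and tail: "\<And>m. k \<le> m \<Longrightarrow> sum cw {k..m} \<le> B"
    and lower: "\<And>m. k \<le> m \<Longrightarrow> m < N \<Longrightarrow> - D \<le> sum cu {k..m}"
  shows "ramp_sum (Suc N) cw
    \<le> ramp_sum N cu + sum cu {..<k} + real (Suc N - k) * B + real (N - k) * D"
proof -
  have prefix: "sum cw {..<k} = sum cu {..<k}"
    using agree by (intro sum.cong) auto
  have "(\<Sum>m\<in>{k..<Suc N}. sum cw {k..m}) \<le> real (Suc N - k) * B"
    using sum_mono[of "{k..<Suc N}" "\<lambda>m. sum cw {k..m}" "\<lambda>_. B"] tail by simp
  moreover have "- real (N - k) * D \<le> (\<Sum>m\<in>{k..<N}. sum cu {k..m})"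
    using sum_mono[of "{k..<N}" "\<lambda>_. - D" "\<lambda>m. sum cu {k..m}"] lower by simp
  moreover have "real (Suc N - k) = real (N - k) + 1"
    using assms(1) by simp
  ultimately show ?thesis
    using ramp_sum_split[of k "Suc N" cw] ramp_sum_split[of k N cu] assms(1) prefix
      sum_partial_sums_cong[of k cw cu] agree by (simp add: algebra_simps)
qed

section \<open>Concatenated controls and the value function\<close>

lemma traj_cong: "(\<And>i. i < n \<Longrightarrow> u i = v i) \<Longrightarrow> traj f x u n = traj f x v n"
  by (induction n) auto

lemma traj_Suc_shift: "traj f (f x (u 0)) (\<lambda>i. u (Suc i)) n = traj f x u (Suc n)"
  by (induction n) auto

definition ctrl_append :: "(nat \<Rightarrow> 'u) \<Rightarrow> nat \<Rightarrow> (nat \<Rightarrow> 'u) \<Rightarrow> nat \<Rightarrow> 'u" where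
  "ctrl_append u k w i = (if i < k then u i else w (i - k))"

lemma traj_ctrl_append_le: "i \<le> k \<Longrightarrow> traj f x (ctrl_append u k w) i = traj f x u i"
  by (rule traj_cong) (simp add: ctrl_append_def)

lemma traj_ctrl_append_add: "traj f x (ctrl_append u k w) (k + d) = traj f (traj f x u k) w d"
proof (induction d)
  case 0
  then show ?case by (simp add: traj_ctrl_append_le)
next
  case (Suc d)
  then show ?case by (simp add: ctrl_append_def)
qed

lemma traj_ctrl_append_ge:
  "k \<le> i \<Longrightarrow> traj f x (ctrl_append u k w) i = traj f (traj f x u k) w (i - k)"
  using traj_ctrl_append_add[of f x u k w "i - k"] by simp

lemma admissible_ctrl_append:
  assumes "admissible f X U n x u" "k \<le> n"
    and "\<And>t. w t \<in> U" "\<And>t. traj f (traj f x u k) w t \<in> X"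
  shows "admissible f X U T x (ctrl_append u k w)"
proof -
  have "traj f x (ctrl_append u k w) i \<in> X" for i
    using assms by (cases "i \<le> k") (auto simp: admissible_def traj_ctrl_append_le traj_ctrl_append_ge)
  then show ?thesis
    using assms by (auto simp: admissible_def ctrl_append_def)
qed

definition traj_cost :: "('x \<Rightarrow> 'u \<Rightarrow> 'x) \<Rightarrow> ('x \<Rightarrow> 'u \<Rightarrow> real) \<Rightarrow> 'x \<Rightarrow> (nat \<Rightarrow> 'u) \<Rightarrow> nat \<Rightarrow> real" where
  "traj_cost f l x u i = l (traj f x u i) (u i)"

lemma traj_cost_ctrl_append:
  "traj_cost f l x (ctrl_append u k w) i =
     (if i < k then traj_cost f l x u i else traj_cost f l (traj f x u k) w (i - k))"
  by (simp add: traj_cost_def ctrl_append_def traj_ctrl_append_le traj_ctrl_append_ge)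

lemma traj_cost_Suc_shift:
  "traj_cost f l (f x (u 0)) (\<lambda>i. u (Suc i)) i = traj_cost f l x u (Suc i)"
  by (simp add: traj_cost_def traj_Suc_shift)

lemma Jbeta_eq_ramp_sum: "Jbeta f l N x u = ramp_sum N (traj_cost f l x u) / real N"
  by (simp add: Jbeta_def ramp_sum_def traj_cost_def sum_divide_distrib)

lemma Vbeta_le_Jbeta: "admissible f X U N x u \<Longrightarrow> Vbeta f X U l N x \<le> ereal (Jbeta f l N x u)"
  unfolding Vbeta_def by (rule INF_lower) simp

lemma admissible_Suc_shift:
  "admissible f X U (Suc N) x u \<Longrightarrow> admissible f X U N (f x (u 0)) (\<lambda>i. u (Suc i))"
  by (simp add: admissible_def traj_Suc_shift del: traj.simps(2))

lemma Vbeta_Suc_le_of_extension: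
  assumes "0 < N"
    and opt: "ereal (Jbeta f l N x u) = Vbeta f X U l N x"
    and adm: "admissible f X U (Suc N) x u'"
    and ext: "ramp_sum (Suc N) (traj_cost f l x u') \<le> ramp_sum N (traj_cost f l x u) + real (Suc N) * (e + d)"
  shows "Vbeta f X U l (N + 1) x \<le> ereal (real N / real (N + 1)) * Vbeta f X U l N x + ereal (e + d)"
proof -
  have "Jbeta f l (Suc N) x u'
      \<le> (ramp_sum N (traj_cost f l x u) + real (Suc N) * (e + d)) / real (Suc N)"
    using ext by (simp add: Jbeta_eq_ramp_sum divide_right_mono)
  also have "\<dots> = real N / real (N + 1) * Jbeta f l N x u + (e + d)"
    using assms(1) by (simp add: Jbeta_eq_ramp_sum add_divide_distrib)
  finally show ?thesis
    using Vbeta_le_Jbeta[OF adm, of l] opt[symmetric] by (simp add: order_trans)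
qed

lemma Vbeta_step_le_of_extension:
  assumes "0 < N"
    and opt: "ereal (Jbeta f l N x u) = Vbeta f X U l N x"
    and adm: "admissible f X U (Suc N) x u'"
    and ext: "ramp_sum (Suc N) (traj_cost f l x u') \<le> ramp_sum N (traj_cost f l x u) + real (Suc N) * (e + d)"
  shows "Vbeta f X U l N (f x (u' 0))
    \<le> Vbeta f X U l N x + ereal (real (N + 1) / real N * (e - l x (u' 0) + d))"
proof -
  have "ramp_sum (Suc N) (traj_cost f l x u')
      = real (Suc N) * l x (u' 0) + ramp_sum N (traj_cost f l (f x (u' 0)) (\<lambda>i. u' (Suc i)))"
    by (simp add: ramp_sum_Suc_shift traj_cost_Suc_shift[symmetric] traj_cost_def[of f l x u' 0])
  then have "Jbeta f l N (f x (u' 0)) (\<lambda>i. u' (Suc i))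
      \<le> (ramp_sum N (traj_cost f l x u) + real (Suc N) * (e - l x (u' 0) + d)) / real N"
    using ext by (simp add: Jbeta_eq_ramp_sum divide_right_mono algebra_simps)
  also have "\<dots> = Jbeta f l N x u + real (N + 1) / real N * (e - l x (u' 0) + d)"
    using assms(1) by (simp add: Jbeta_eq_ramp_sum field_simps)
  finally show ?thesis
    using Vbeta_le_Jbeta[OF admissible_Suc_shift[OF adm], of l] opt[symmetric]
    by (simp add: order_trans)
qed

section \<open>Choosing times near the orbit\<close>

lemma window_contains_if_few_exceptions:
  assumes "card {i. i < N \<and> \<not> Q i} < g" "a + g \<le> N"
  obtains i where "a \<le> i" "i < a + g" "Q i"
proof -
  have "\<not> {a..<a + g} \<subseteq> {i. i < N \<and> \<not> Q i}"
  proof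
    assume "{a..<a + g} \<subseteq> {i. i < N \<and> \<not> Q i}"
    then have "card {a..<a + g} \<le> card {i. i < N \<and> \<not> Q i}"
      by (intro card_mono) auto
    then show False
      using assms(1) by simp
  qed
  then show thesis
    using that assms(2) by auto
qed

lemma card_not_add_card_le:
  assumes "\<And>i. i < N \<Longrightarrow> Q i \<Longrightarrow> R i"
  shows "card {i. i < N \<and> \<not> R i} + card {i. i < N \<and> Q i} \<le> N"
proof -
  have "card {i. i < N \<and> \<not> R i} + card {i. i < N \<and> Q i} = card ({i. i < N \<and> \<not> R i} \<union> {i. i < N \<and> Q i})"
    using assms by (intro card_Un_disjoint[symmetric]) auto
  also have "\<dots> \<le> card {..<N}"
    by (intro card_mono) auto
  finally show ?thesis by simp
qed

lemma splice_error_le: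
  fixes s c L B D k0 M :: real
  assumes "1 \<le> s" "0 \<le> c" "0 \<le> L" "0 \<le> B" "0 \<le> D"
    and "k0 \<le> c * s" "s \<le> M" "M \<le> (1 + c) * s + 2"
  shows "k0 * L + s\<^sup>2 * (B + D) / M + (M + 1) * B + M * D
    \<le> (c * L + (B + D) + (4 + c) * B + (3 + c) * D) * s"
proof -
  have "k0 * L \<le> c * s * L"
    using assms by (intro mult_right_mono) auto
  moreover have "s\<^sup>2 * (B + D) / M \<le> s\<^sup>2 * (B + D) / s"
    using assms by (intro divide_left_mono) auto
  moreover have "s\<^sup>2 * (B + D) / s = s * (B + D)"
    using assms(1) by (simp add: power2_eq_square)
  moreover have "(M + 1) * B \<le> (4 + c) * s * B"
    using assms by (intro mult_right_mono) (auto simp: algebra_simps)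
  moreover have "M * D \<le> (3 + c) * s * D"
    using assms by (intro mult_right_mono) (auto simp: algebra_simps)
  ultimately have "k0 * L + s\<^sup>2 * (B + D) / M + (M + 1) * B + M * D
      \<le> c * s * L + s * (B + D) + (4 + c) * s * B + (3 + c) * s * D"
    by linarith
  also have "\<dots> = (c * L + (B + D) + (4 + c) * B + (3 + c) * D) * s"
    by (simp add: algebra_simps)
  finally show ?thesis .
qed

lemma obtain_turnpike_times:
  fixes c :: real
  assumes "0 \<le> c" "(2 * c + 3)\<^sup>2 \<le> real N"
    and few_exceptions: "real (card {i. i < N \<and> \<not> Q i}) \<le> c * sqrt (real N)"
  obtains k0 k where "k0 \<le> k" "0 < k" "k < N" "Q k0" "Q k" "real k0 \<le> c * sqrt (real N)"
    "sqrt (real N) \<le> real (N - k)" "real (N - k) \<le> (1 + c) * sqrt (real N) + 2"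
proof -
  define s where "s = sqrt (real N)"
  have s: "2 * c + 3 \<le> s" "s\<^sup>2 = real N"
    using assms(1,2) by (auto simp: s_def real_le_rsqrt)
  define g where "g = nat \<lfloor>c * s\<rfloor> + 1"
  define W where "W = nat \<lceil>s\<rceil>"
  have "0 \<le> c * s"
    using s(1) assms(1) by simp
  then have g: "c * s < real g" "real g \<le> c * s + 1" and W: "s \<le> real W" "real W < s + 1"
    using real_of_int_floor_add_one_gt[of "c * s"] ceiling_correct[of s] s(1) assms(1)
    unfolding g_def W_def by (simp_all add: of_nat_nat add.commute)
  have few: "card {i. i < N \<and> \<not> Q i} < g"
    using few_exceptions g(1) unfolding s_def by linarith
  have "(2 * c + 3) * s \<le> s * s"
    using s(1) assms(1) by (intro mult_right_mono) auto
  moreover have "(2 * c + 3) * s = 2 * (c * s) + 3 * s"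
    by (simp add: algebra_simps)
  ultimately have "real W + 2 * real g \<le> real N"
    using s g W assms(1) unfolding power2_eq_square by linarith
  then have N: "W + 2 * g \<le> N"
    by linarith
  obtain k0 where k0: "k0 < g" "Q k0"
    using window_contains_if_few_exceptions[OF few, of 0] N by auto
  obtain k where k: "N - W - g \<le> k" "k < N - W" "Q k"
    using window_contains_if_few_exceptions[OF few, of "N - W - g"] N by auto
  have "W < N - k" "N - k \<le> W + g"
    using k N by linarith+
  then have "s \<le> real (N - k)" "real (N - k) \<le> (1 + c) * s + 2"
    using g W by (simp_all add: algebra_simps)
  moreover have "k0 \<le> k" "0 < k" "k < N"
    using k0 k N by linarith+
  moreover have "real k0 \<le> c * s"
    using g(2) of_nat_mono[where 'a = real, OF Suc_leI[OF k0(1)]] by simp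
  ultimately show thesis
    using that k0(2) k(3) unfolding s_def by blast
qed

lemma sqrt_le_Suc_div_sqrt:
  fixes n :: real
  assumes "0 \<le> n"
  shows "sqrt n \<le> (n + 1) / sqrt (n + 2)"
proof -
  have "sqrt n * sqrt (n + 2) = sqrt (n * (n + 2))"
    by (simp add: real_sqrt_mult)
  also have "\<dots> \<le> sqrt ((n + 1)\<^sup>2)"
    by (intro real_sqrt_le_mono) (simp add: power2_eq_square algebra_simps)
  finally show ?thesis
    using assms by (simp add: pos_le_divide_eq)
qed

section \<open>Dissipativity along a periodic orbit\<close>

lemma orbit_dist_attained:
  assumes "0 < p"
  obtains j where "j < p" "orbit_dist p P z = norm (z - P j)"
proof -
  have "orbit_dist p P z \<in> (\<lambda>k. norm (z - P k)) ` {..<p}"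
    unfolding orbit_dist_def using assms by (intro Min_in) auto
  then show thesis using that by auto
qed

lemma orbit_dist_nonneg: "0 < p \<Longrightarrow> 0 \<le> orbit_dist p P z"
  by (metis norm_ge_zero orbit_dist_attained)

lemma orbit_state_near_if_orbit_dist_le:
  assumes "0 < p" "orbit_dist p P (y, v) \<le> r"
  obtains j where "j < p" "norm (y - fst (P j)) \<le> r"
proof -
  obtain j where "j < p" "orbit_dist p P (y, v) = norm ((y, v) - P j)"
    using orbit_dist_attained[OF assms(1)] by blast
  moreover have "norm (y - fst (P j)) \<le> norm ((y, v) - P j)"
    by (cases "P j") (simp add: norm_fst_le)
  ultimately show thesis using that assms(2) by force
qed

lemma sum_lessThan_rotate:
  assumes "0 < p"
  shows "(\<Sum>j<p. h (Suc j mod p)) = (\<Sum>j<p. h j)"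
proof -
  obtain q where p: "p = Suc q" using assms not0_implies_Suc by blast
  have "(\<Sum>j<q. h (Suc j mod p)) = (\<Sum>j<q. h (Suc j))"
    unfolding p by (intro sum.cong) auto
  then have "(\<Sum>j<p. h (Suc j mod p)) = h 0 + (\<Sum>j<q. h (Suc j))"
    unfolding p by (simp add: add.commute)
  also have "\<dots> = (\<Sum>j<p. h j)"
    unfolding p sum.lessThan_Suc_shift ..
  finally show ?thesis .
qed

locale dissipative_orbit =
  fixes f :: "'x::real_normed_vector \<Rightarrow> 'u::real_normed_vector \<Rightarrow> 'x" and X :: "'x set" and U :: "'u set"
    and l :: "'x \<Rightarrow> 'u \<Rightarrow> real" and p :: nat and P :: "nat \<Rightarrow> 'x \<times> 'u"
    and lam :: "'x \<Rightarrow> real" and lbar :: real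
  assumes orbit: "periodic_orbit f X U p P"
    and dissipative: "\<And>x u. x \<in> X \<Longrightarrow> u \<in> U \<Longrightarrow> f x u \<in> X \<Longrightarrow>
      avg_cost l p P \<le> l x u + lam x - lam (f x u)"
    and storage_bounded: "\<And>x. x \<in> X \<Longrightarrow> \<bar>lam x\<bar> \<le> lbar"
begin

lemma period_pos: "0 < p"
  using orbit by (simp add: periodic_orbit_def)

lemma orbit_state_mem: "j < p \<Longrightarrow> fst (P j) \<in> X"
  and orbit_input_mem: "j < p \<Longrightarrow> snd (P j) \<in> U"
  and orbit_step: "j < p \<Longrightarrow> f (fst (P j)) (snd (P j)) = fst (P (Suc j mod p))"
  using orbit by (auto simp: periodic_orbit_def mem_Times_iff)

lemma storage_bound_nonneg: "0 \<le> lbar"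
  using storage_bounded[OF orbit_state_mem[OF period_pos]] by linarith

text \<open>The dissipation slacks along the orbit are nonnegative and sum to zero: the orbit's stage
  costs average to the orbit cost, and the storage terms telescope around the period.\<close>
lemma dissipation_tight_on_orbit:
  assumes "j < p"
  shows "l (fst (P j)) (snd (P j)) - avg_cost l p P = lam (fst (P (Suc j mod p))) - lam (fst (P j))"
proof -
  define slack where "slack i = l (fst (P i)) (snd (P i)) - avg_cost l p P
      + lam (fst (P i)) - lam (fst (P (Suc i mod p)))" for i
  have slack_nonneg: "0 \<le> slack i" if "i < p" for i
    using dissipative[OF orbit_state_mem[OF that] orbit_input_mem[OF that]]
      orbit_state_mem[of "Suc i mod p"] period_pos that
    by (simp add: slack_def orbit_step)
  have "(\<Sum>i<p. l (fst (P i)) (snd (P i))) = real p * avg_cost l p P"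
    using period_pos by (simp add: avg_cost_def case_prod_beta)
  then have "(\<Sum>i<p. slack i) = 0"
    by (simp add: slack_def sum.distrib sum_subtractf
        sum_lessThan_rotate[OF period_pos, of "\<lambda>i. lam (fst (P i))"])
  then have "slack j = 0"
    using sum_nonneg_eq_0_iff[of "{..<p}" slack] slack_nonneg assms by simp
  then show ?thesis by (simp add: slack_def)
qed

definition orbit_ctrl :: "nat \<Rightarrow> nat \<Rightarrow> 'u" where
  "orbit_ctrl j t = snd (P ((j + t) mod p))"

lemma traj_orbit_ctrl: "j < p \<Longrightarrow> traj f (fst (P j)) (orbit_ctrl j) n = fst (P ((j + n) mod p))"
  by (induction n) (simp_all add: orbit_ctrl_def orbit_step period_pos mod_Suc_eq)

definition rotated_cost :: "'x \<Rightarrow> (nat \<Rightarrow> 'u) \<Rightarrow> nat \<Rightarrow> real" where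
  "rotated_cost x u i = traj_cost f l x u i - avg_cost l p P"

lemma rotated_cost_ctrl_append:
  "rotated_cost x (ctrl_append u k w) i =
     (if i < k then rotated_cost x u i else rotated_cost (traj f x u k) w (i - k))"
  by (simp add: rotated_cost_def traj_cost_ctrl_append)

lemma sum_rotated_cost_ctrl_append_from:
  "sum (rotated_cost x (ctrl_append u k w)) {k..<n} = sum (rotated_cost (traj f x u k) w) {..<n - k}"
proof (cases "k \<le> n")
  case True
  have "sum (rotated_cost x (ctrl_append u k w)) {0 + k..<(n - k) + k}
      = sum (\<lambda>i. rotated_cost x (ctrl_append u k w) (i + k)) {0..<n - k}"
    by (rule sum.shift_bounds_nat_ivl)
  then show ?thesis
    using True by (simp add: rotated_cost_ctrl_append atLeast0LessThan)
qed simp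

lemma sum_rotated_cost_orbit_ctrl_le:
  assumes "j < p"
  shows "sum (rotated_cost (fst (P j)) (orbit_ctrl j)) {..<n} \<le> 2 * lbar"
proof -
  have "rotated_cost (fst (P j)) (orbit_ctrl j) i
      = lam (fst (P ((j + Suc i) mod p))) - lam (fst (P ((j + i) mod p)))" for i
    using dissipation_tight_on_orbit[of "(j + i) mod p"] period_pos
    by (simp add: rotated_cost_def traj_cost_def traj_orbit_ctrl[OF assms] orbit_ctrl_def mod_Suc_eq)
  then have "sum (rotated_cost (fst (P j)) (orbit_ctrl j)) {..<n}
      = lam (fst (P ((j + n) mod p))) - lam (fst (P j))"
    using sum_lessThan_telescope[of "\<lambda>i. lam (fst (P ((j + i) mod p)))" n] assms by simp
  then show ?thesis
    using storage_bounded[OF orbit_state_mem[OF assms]]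
      storage_bounded[OF orbit_state_mem[of "(j + n) mod p"]] period_pos by simp
qed

lemma sum_rotated_cost_lower:
  assumes adm: "admissible f X U N x u" and "m < N"
  shows "- 2 * lbar \<le> sum (rotated_cost x u) {a..m}"
proof (cases "a \<le> Suc m")
  case True
  have "traj f x u a \<in> X" "traj f x u (Suc m) \<in> X"
    using adm True \<open>m < N\<close> by (auto simp: admissible_def simp del: traj.simps(2))
  note storage = storage_bounded[OF this(1)] storage_bounded[OF this(2)]
  have "lam (traj f x u (Suc m)) - lam (traj f x u a)
      = (\<Sum>i=a..m. lam (traj f x u (Suc i)) - lam (traj f x u i))"
    by (rule sum_Suc_diff[OF True, of "\<lambda>i. lam (traj f x u i)", symmetric])
  also have "\<dots> \<le> sum (rotated_cost x u) {a..m}"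
  proof (intro sum_mono)
    fix i assume "i \<in> {a..m}"
    then have "traj f x u i \<in> X" "u i \<in> U" "traj f x u (Suc i) \<in> X"
      using adm \<open>m < N\<close> by (auto simp: admissible_def simp del: traj.simps(2))
    then show "lam (traj f x u (Suc i)) - lam (traj f x u i) \<le> rotated_cost x u i"
      using dissipative[of "traj f x u i" "u i"] by (simp add: rotated_cost_def traj_cost_def)
  qed
  finally show ?thesis
    using storage by linarith
next
  case False
  then show ?thesis using storage_bound_nonneg by simp
qed

end

locale steerable_dissipative_orbit = dissipative_orbit +
  fixes L kappa :: real and M' :: nat
  assumes rotated_cost_bounded: "\<And>x u. x \<in> X \<Longrightarrow> u \<in> U \<Longrightarrow> l x u - avg_cost l p P \<le> L"
    and rotated_cost_bound_nonneg: "0 \<le> L"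
    and steer_to_orbit: "\<And>j x. j < p \<Longrightarrow> x \<in> X \<Longrightarrow> norm (x - fst (P j)) \<le> kappa \<Longrightarrow>
      \<exists>u. admissible f X U M' x u \<and> traj f x u M' = fst (P j)"
begin

definition near_orbit where
  "near_orbit y \<longleftrightarrow> (\<exists>j<p. norm (y - fst (P j)) \<le> kappa)"

lemma rotated_cost_le: "admissible f X U N x u \<Longrightarrow> i < N \<Longrightarrow> rotated_cost x u i \<le> L"
  by (simp add: admissible_def rotated_cost_def traj_cost_def rotated_cost_bounded)

lemma orbit_tail:
  assumes "y \<in> X" "near_orbit y"
  obtains w where "\<And>t. w t \<in> U" "\<And>t. traj f y w t \<in> X"
    "\<And>n. sum (rotated_cost y w) {..<n} \<le> real M' * L + 2 * lbar"
proof -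
  obtain j where j: "j < p" "norm (y - fst (P j)) \<le> kappa"
    using assms(2) by (auto simp: near_orbit_def)
  then obtain v where v: "admissible f X U M' y v" "traj f y v M' = fst (P j)"
    using steer_to_orbit assms(1) by blast
  define w where "w = ctrl_append v M' (orbit_ctrl j)"
  have "w t \<in> U" for t
    using v(1) orbit_input_mem period_pos
    by (auto simp: w_def ctrl_append_def admissible_def orbit_ctrl_def)
  moreover have "traj f y w t \<in> X" for t
    using v j(1) orbit_state_mem period_pos
    by (cases "t \<le> M'") (auto simp: w_def admissible_def traj_ctrl_append_le
        traj_ctrl_append_ge traj_orbit_ctrl)
  moreover have "sum (rotated_cost y w) {..<n} \<le> real M' * L + 2 * lbar" for n
  proof -
    have "sum (rotated_cost y w) {..<min n M'} = sum (rotated_cost y v) {..<min n M'}"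
      by (intro sum.cong) (auto simp: w_def rotated_cost_ctrl_append)
    also have "\<dots> \<le> real (min n M') * L"
      using sum_mono[of "{..<min n M'}" "rotated_cost y v" "\<lambda>_. L"] rotated_cost_le[OF v(1)] by simp
    also have "\<dots> \<le> real M' * L"
      using rotated_cost_bound_nonneg by (simp add: mult_right_mono)
    finally have head: "sum (rotated_cost y w) {..<min n M'} \<le> real M' * L" .
    have "sum (rotated_cost y w) {M'..<n} \<le> 2 * lbar"
      using sum_rotated_cost_orbit_ctrl_le[OF j(1)] v(2)
      by (simp add: w_def sum_rotated_cost_ctrl_append_from)
    moreover have "sum (rotated_cost y w) {..<n}
        = sum (rotated_cost y w) {..<min n M'} + sum (rotated_cost y w) {M'..<n}"
      using sum.atLeastLessThan_concat[of 0 M' n "rotated_cost y w"]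
      by (cases "M' \<le> n") (simp_all add: atLeast0LessThan min_def)
    ultimately show ?thesis using head by simp
  qed
  ultimately show thesis using that by blast
qed

lemma ramp_sum_rotated_cost:
  "ramp_sum N (rotated_cost x u) = ramp_sum N (traj_cost f l x u) - avg_cost l p P * ramp_sum N (\<lambda>_. 1)"
  using ramp_sum_diff_const[of N "traj_cost f l x u" "avg_cost l p P"]
  by (simp add: rotated_cost_def[abs_def])

text \<open>Steering onto the orbit at time k0 yields a competitor of the optimal control; hence the
  optimal trajectory cannot accumulate much rotated cost between k0 and a later time k.\<close>
lemma optimal_excursion_bound:
  assumes adm: "admissible f X U N x u"
    and opt: "\<And>v. admissible f X U N x v \<Longrightarrow> Jbeta f l N x u \<le> Jbeta f l N x v"
    and "k0 \<le> k" "k \<le> N" "k0 < N" "near_orbit (traj f x u k0)"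
  shows "real (N - k) * sum (rotated_cost x u) {k0..<k} \<le> real N * (real M' * L + 4 * lbar)"
proof -
  have "traj f x u k0 \<in> X"
    using adm assms(5) by (simp add: admissible_def)
  then obtain w where w: "\<And>t. w t \<in> U" "\<And>t. traj f (traj f x u k0) w t \<in> X"
    "\<And>n. sum (rotated_cost (traj f x u k0) w) {..<n} \<le> real M' * L + 2 * lbar"
    using orbit_tail assms(6) by blast
  define v where "v = ctrl_append u k0 w"
  have "admissible f X U N x v"
    unfolding v_def using adm assms(5) w(1,2) by (intro admissible_ctrl_append) auto
  then have "ramp_sum N (traj_cost f l x u) \<le> ramp_sum N (traj_cost f l x v)"
    using opt assms(5) by (fastforce simp: Jbeta_eq_ramp_sum divide_le_cancel)
  then have "ramp_sum N (rotated_cost x u) \<le> ramp_sum N (rotated_cost x v)"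
    by (simp add: ramp_sum_rotated_cost)
  moreover have "rotated_cost x v i = rotated_cost x u i" if "i < k0" for i
    using that by (simp add: v_def rotated_cost_ctrl_append)
  moreover have "sum (rotated_cost x v) {k0..m} \<le> real M' * L + 2 * lbar" for m
    using w(3) unfolding v_def atLeastLessThanSuc_atLeastAtMost[symmetric]
    by (simp only: sum_rotated_cost_ctrl_append_from)
  moreover have "- (2 * lbar) \<le> sum (rotated_cost x u) {a..m}" if "m < N" for a m
    using sum_rotated_cost_lower[OF adm that] by simp
  ultimately have "real (N - k) * sum (rotated_cost x u) {k0..<k}
      \<le> real (N - k0) * (real M' * L + 2 * lbar + 2 * lbar)"
    by (intro ramp_sum_le_imp_excursion_bound[OF assms(3,4)])
  also have "\<dots> = real (N - k0) * (real M' * L + 4 * lbar)"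
    by simp
  also have "\<dots> \<le> real N * (real M' * L + 4 * lbar)"
    using rotated_cost_bound_nonneg storage_bound_nonneg by (intro mult_right_mono) auto
  finally show ?thesis .
qed

lemma optimal_prefix_bound:
  assumes adm: "admissible f X U N x u"
    and opt: "\<And>v. admissible f X U N x v \<Longrightarrow> Jbeta f l N x u \<le> Jbeta f l N x v"
    and "k0 \<le> k" "k < N" "near_orbit (traj f x u k0)"
  shows "sum (rotated_cost x u) {..<k} \<le> real k0 * L + real N * (real M' * L + 4 * lbar) / real (N - k)"
proof -
  have "sum (rotated_cost x u) {..<k0} \<le> real k0 * L"
    using sum_mono[of "{..<k0}" "rotated_cost x u" "\<lambda>_. L"] rotated_cost_le[OF adm] assms(3,4) by simp
  moreover have "sum (rotated_cost x u) {k0..<k} \<le> real N * (real M' * L + 4 * lbar) / real (N - k)"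
    using optimal_excursion_bound[OF adm opt assms(3) _ _ assms(5)] assms(3,4)
    by (simp add: pos_le_divide_eq mult.commute)
  moreover have "sum (rotated_cost x u) {..<k} = sum (rotated_cost x u) {..<k0} + sum (rotated_cost x u) {k0..<k}"
    using sum.atLeastLessThan_concat[of 0 k0 k "rotated_cost x u"] assms(3) by (simp add: atLeast0LessThan)
  ultimately show ?thesis
    by (metis add_mono)
qed

lemma ctrl_extension_bound:
  assumes adm: "admissible f X U N x u" and "k \<le> N" "near_orbit (traj f x u k)"
  obtains u' where "admissible f X U (Suc N) x u'" "\<And>i. i < k \<Longrightarrow> u' i = u i"
    "ramp_sum (Suc N) (traj_cost f l x u') \<le> ramp_sum N (traj_cost f l x u)
       + real (Suc N) * avg_cost l p P + sum (rotated_cost x u) {..<k}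
       + real (Suc N - k) * (real M' * L + 2 * lbar) + real (N - k) * (2 * lbar)"
proof -
  have "traj f x u k \<in> X"
    using adm assms(2) by (simp add: admissible_def)
  then obtain w where w: "\<And>t. w t \<in> U" "\<And>t. traj f (traj f x u k) w t \<in> X"
    "\<And>n. sum (rotated_cost (traj f x u k) w) {..<n} \<le> real M' * L + 2 * lbar"
    using orbit_tail assms(3) by blast
  define u' where "u' = ctrl_append u k w"
  have "admissible f X U (Suc N) x u'"
    unfolding u'_def using adm assms(2) w(1,2) by (intro admissible_ctrl_append) auto
  moreover have "u' i = u i" if "i < k" for i
    using that by (simp add: u'_def ctrl_append_def)
  moreover have "ramp_sum (Suc N) (rotated_cost x u') \<le> ramp_sum N (rotated_cost x u)
      + sum (rotated_cost x u) {..<k} + real (Suc N - k) * (real M' * L + 2 * lbar)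
      + real (N - k) * (2 * lbar)"
  proof (rule ramp_sum_Suc_le_of_tail[OF assms(2)])
    show "rotated_cost x u' i = rotated_cost x u i" if "i < k" for i
      using that by (simp add: u'_def rotated_cost_ctrl_append)
    show "sum (rotated_cost x u') {k..m} \<le> real M' * L + 2 * lbar" for m
      using w(3) unfolding u'_def atLeastLessThanSuc_atLeastAtMost[symmetric]
      by (simp only: sum_rotated_cost_ctrl_append_from)
    show "- (2 * lbar) \<le> sum (rotated_cost x u) {k..m}" if "m < N" for m
      using sum_rotated_cost_lower[OF adm that] by simp
  qed
  moreover have "ramp_sum (Suc N) (\<lambda>_. 1) = ramp_sum N (\<lambda>_. 1) + real (Suc N)"
    by (simp add: ramp_sum_Suc)
  ultimately show thesis
    using that by (simp add: ramp_sum_rotated_cost algebra_simps)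
qed

text \<open>The terms bound, in this order, the rotated cost before k0, the excursion between k0 and k,
  and the tail and dissipation losses after k, for the two times k0 and k near the orbit that are
  used in the proof of \<open>near_turnpike_extension\<close>.\<close>
definition extension_const :: "real \<Rightarrow> real" where
  "extension_const c = c * L + (real M' * L + 4 * lbar) + (4 + c) * (real M' * L + 2 * lbar)
     + (3 + c) * (2 * lbar)"

lemma extension_const_nonneg: "0 \<le> c \<Longrightarrow> 0 \<le> extension_const c"
  using rotated_cost_bound_nonneg storage_bound_nonneg by (simp add: extension_const_def)

lemma near_turnpike_extension:
  assumes adm: "admissible f X U N x u"
    and opt: "\<And>v. admissible f X U N x v \<Longrightarrow> Jbeta f l N x u \<le> Jbeta f l N x v"
    and "0 \<le> c" "(2 * c + 3)\<^sup>2 \<le> real N"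
    and few_far: "real (card {i. i < N \<and> \<not> near_orbit (traj f x u i)}) \<le> c * sqrt (real N)"
  obtains u' where "admissible f X U (Suc N) x u'" "u' 0 = u 0"
    "ramp_sum (Suc N) (traj_cost f l x u') \<le> ramp_sum N (traj_cost f l x u)
       + real (Suc N) * avg_cost l p P + extension_const c * sqrt (real N)"
proof -
  define s where "s = sqrt (real N)"
  obtain k0 k where k: "k0 \<le> k" "0 < k" "k < N" "near_orbit (traj f x u k0)" "near_orbit (traj f x u k)"
    "real k0 \<le> c * s" "s \<le> real (N - k)" "real (N - k) \<le> (1 + c) * s + 2"
    using obtain_turnpike_times[OF assms(3,4) few_far] unfolding s_def by blast
  have "2 * c + 3 \<le> s"
    using assms(3,4) by (simp add: s_def real_le_rsqrt)
  define M where "M = N - k"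
  have M: "0 < real M" "real (Suc N - k) = real M + 1" "s\<^sup>2 = real N" "1 \<le> s"
    using k \<open>0 \<le> c\<close> \<open>2 * c + 3 \<le> s\<close> unfolding M_def s_def by (auto simp: Suc_diff_le)
  obtain u' where u': "admissible f X U (Suc N) x u'" "\<And>i. i < k \<Longrightarrow> u' i = u i"
    "ramp_sum (Suc N) (traj_cost f l x u') \<le> ramp_sum N (traj_cost f l x u)
       + real (Suc N) * avg_cost l p P + sum (rotated_cost x u) {..<k}
       + real (Suc N - k) * (real M' * L + 2 * lbar) + real (N - k) * (2 * lbar)"
    using ctrl_extension_bound[OF adm _ k(5)] k(3) by (metis less_imp_le)
  have prefix: "sum (rotated_cost x u) {..<k} \<le> real k0 * L + real N * (real M' * L + 4 * lbar) / real M"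
    using optimal_prefix_bound[OF adm opt k(1,3,4)] unfolding M_def .
  have "real M' * L + 2 * lbar + 2 * lbar = real M' * L + 4 * lbar"
    by simp
  then have "real k0 * L + real N * (real M' * L + 4 * lbar) / real M
      + (real M + 1) * (real M' * L + 2 * lbar) + real M * (2 * lbar) \<le> extension_const c * s"
    using splice_error_le[of s c L "real M' * L + 2 * lbar" "2 * lbar" "real k0" "real M"]
      k M \<open>0 \<le> c\<close> rotated_cost_bound_nonneg storage_bound_nonneg
    unfolding extension_const_def M_def by (simp add: ac_simps)
  then have "ramp_sum (Suc N) (traj_cost f l x u') \<le> ramp_sum N (traj_cost f l x u)
      + real (Suc N) * avg_cost l p P + extension_const c * sqrt (real N)"
    using u'(3)[unfolded M_def[symmetric] M(2)] prefix unfolding s_def[symmetric] by linarith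
  then show thesis
    using that u'(1) u'(2)[OF k(2)] by blast
qed

lemma near_orbit_if_orbit_dist_le: "orbit_dist p P (y, v) \<le> kappa \<Longrightarrow> near_orbit y"
  unfolding near_orbit_def using period_pos by (metis orbit_state_near_if_orbit_dist_le)

lemma card_not_near_orbit_le_of_Xturn:
  assumes "0 < kappa" "x \<in> Xturn f X U uopt p P alpha N0" "N0 \<le> N"
  shows "real (card {i. i < N \<and> \<not> near_orbit (traj f x (uopt N x) i)}) \<le> sqrt (real N) / alpha kappa"
proof -
  have "card {i. i < N \<and> \<not> near_orbit (traj f x (uopt N x) i)} + Qcount f uopt p P kappa N x \<le> N"
    unfolding Qcount_def by (intro card_not_add_card_le near_orbit_if_orbit_dist_le)
  moreover have "real N - sqrt (real N) / alpha kappa \<le> real (Qcount f uopt p P kappa N x)"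
    using assms unfolding Xturn_def by auto
  ultimately show ?thesis
    by linarith
qed

lemma Vbeta_bounds_on_Xturn:
  assumes uopt_min: "\<forall>N x. (\<exists>u. admissible f X U N x u) \<longrightarrow>
      admissible f X U N x (uopt N x) \<and> ereal (Jbeta f l N x (uopt N x)) = Vbeta f X U l N x"
    and "0 < kappa" and alpha: "0 < alpha kappa"
    and x: "x \<in> Xturn f X U uopt p P alpha N0" and N: "N0 \<le> N" "(2 / alpha kappa + 3)\<^sup>2 \<le> real N"
  defines "d \<equiv> extension_const (1 / alpha kappa) / sqrt (real (N + 1) + 1)"
  shows "Vbeta f X U l (N + 1) x \<le> ereal (real N / real (N + 1)) * Vbeta f X U l N x
           + ereal (avg_cost l p P + d)
    \<and> Vbeta f X U l N (f x (uopt N x 0)) \<le> Vbeta f X U l N x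
           + ereal (real (N + 1) / real N * (avg_cost l p P - l x (uopt N x 0) + d))"
proof -
  define c where "c = 1 / alpha kappa"
  define u where "u = uopt N x"
  have c: "0 \<le> c" "2 / alpha kappa = 2 * c"
    using alpha by (simp_all add: c_def)
  have Nc: "(2 * c + 3)\<^sup>2 \<le> real N"
    using N(2) c(2) by simp
  moreover have "3\<^sup>2 \<le> (2 * c + 3)\<^sup>2"
    using c(1) by (intro power_mono) auto
  ultimately have "0 < N"
    by simp
  have "\<exists>u. admissible f X U N x u"
    using x N(1) unfolding Xturn_def by auto
  then have adm: "admissible f X U N x u" and opt: "ereal (Jbeta f l N x u) = Vbeta f X U l N x"
    using uopt_min unfolding u_def by auto
  have minimal: "Jbeta f l N x u \<le> Jbeta f l N x v" if "admissible f X U N x v" for v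
    using Vbeta_le_Jbeta[OF that, of l] unfolding opt[symmetric] by simp
  have "real (card {i. i < N \<and> \<not> near_orbit (traj f x u i)}) \<le> c * sqrt (real N)"
    using card_not_near_orbit_le_of_Xturn[OF \<open>0 < kappa\<close> x N(1)] by (simp add: c_def u_def)
  then obtain u' where u': "admissible f X U (Suc N) x u'" "u' 0 = u 0"
    "ramp_sum (Suc N) (traj_cost f l x u') \<le> ramp_sum N (traj_cost f l x u)
       + real (Suc N) * avg_cost l p P + extension_const c * sqrt (real N)"
    using near_turnpike_extension[OF adm minimal c(1) Nc] by blast
  have "extension_const c * sqrt (real N) \<le> extension_const c * ((real N + 1) / sqrt (real N + 2))"
    using sqrt_le_Suc_div_sqrt extension_const_nonneg[OF c(1)] by (intro mult_left_mono) auto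
  also have "\<dots> = real (Suc N) * d"
    by (simp add: d_def c_def add.commute add.left_commute)
  finally have "ramp_sum (Suc N) (traj_cost f l x u')
      \<le> ramp_sum N (traj_cost f l x u) + real (Suc N) * (avg_cost l p P + d)"
    using u'(3) by (simp add: distrib_left)
  then show ?thesis
    using Vbeta_Suc_le_of_extension[OF \<open>0 < N\<close> opt u'(1)]
      Vbeta_step_le_of_extension[OF \<open>0 < N\<close> opt u'(1)] u'(2) unfolding u_def by simp
qed

end

section \<open>Strict dissipativity and local controllability\<close>

lemma Kinf_pos: "Kinf a \<Longrightarrow> 0 < t \<Longrightarrow> 0 < a t"
  unfolding Kinf_def using strict_mono_onD[of "{0..}" a 0 t] by auto

lemma Kinf_nonneg: "Kinf a \<Longrightarrow> 0 \<le> t \<Longrightarrow> 0 \<le> a t"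
  using Kinf_pos[of a t] by (cases "t = 0") (auto simp: Kinf_def)

lemma classL_div_sqrt: "0 \<le> K \<Longrightarrow> classL (\<lambda>t. K / sqrt (t + 1))"
  unfolding classL_def
proof (intro conjI allI impI)
  show "continuous_on {0..} (\<lambda>t. K / sqrt (t + 1))"
    by (intro continuous_intros) auto
  have "filterlim (\<lambda>t::real. t + 1) at_top at_top"
    using filterlim_tendsto_add_at_top[OF tendsto_const filterlim_ident, of "1::real"]
    by (simp add: add.commute)
  then have "filterlim (\<lambda>t. sqrt (t + 1)) at_top at_top"
    by (rule filterlim_compose[OF sqrt_at_top])
  then show "((\<lambda>t. K / sqrt (t + 1)) \<longlongrightarrow> 0) at_top"
    by (intro tendsto_divide_0[OF tendsto_const] filterlim_at_top_imp_at_infinity)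
qed (auto intro: divide_left_mono)

lemma steerable_dissipative_orbit_if_strictly_dissipative:
  fixes f :: "'x::real_normed_vector \<Rightarrow> 'u::real_normed_vector \<Rightarrow> 'x"
  assumes orbit: "periodic_orbit f X U p P"
    and optimal: "avg_cost l p P = ell_star f X U l"
    and "continuous_on (X \<times> U) (\<lambda>(x, u). l x u)" "compact X" "compact U"
    and strict_dissipativity: "\<exists>lam :: 'x \<Rightarrow> real. \<exists>lbar. \<exists>al. Kinf al \<and> (\<forall>x\<in>X. \<bar>lam x\<bar> \<le> lbar) \<and>
      (\<forall>x\<in>X. \<forall>u\<in>U. f x u \<in> X \<longrightarrow>
         l x u - ell_star f X U l + lam x - lam (f x u) \<ge> al (orbit_dist p P (x, u)))"
    and local_controllability: "\<exists>kappa > 0. \<exists>M' :: nat. \<exists>rho. Kinf rho \<and>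
      (\<forall>z \<in> fst ` P ` {..<p}. \<forall>x\<in>X. \<forall>y\<in>X. norm (x - z) \<le> kappa \<longrightarrow> norm (y - z) \<le> kappa \<longrightarrow>
         (\<exists>u. admissible f X U M' x u \<and> traj f x u M' = y \<and>
            (\<forall>k<M'. orbit_dist p P (traj f x u k, u k)
                \<le> rho (max (orbit_state_dist p P x) (orbit_state_dist p P y)))))"
  obtains lam lbar L kappa M'
  where "0 < kappa" "steerable_dissipative_orbit f X U l p P lam lbar L kappa M'"
proof -
  obtain lam lbar al where al: "Kinf al" and lam: "\<forall>x\<in>X. \<bar>lam x\<bar> \<le> lbar"
    and diss: "\<forall>x\<in>X. \<forall>u\<in>U. f x u \<in> X \<longrightarrow>
       l x u - ell_star f X U l + lam x - lam (f x u) \<ge> al (orbit_dist p P (x, u))"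
    using strict_dissipativity by blast
  obtain kappa M' rho where kappa: "0 < kappa" and steer: "\<forall>z \<in> fst ` P ` {..<p}. \<forall>x\<in>X. \<forall>y\<in>X.
      norm (x - z) \<le> kappa \<longrightarrow> norm (y - z) \<le> kappa \<longrightarrow>
         (\<exists>u. admissible f X U M' x u \<and> traj f x u M' = y \<and>
            (\<forall>k<M'. orbit_dist p P (traj f x u k, u k)
                \<le> rho (max (orbit_state_dist p P x) (orbit_state_dist p P y))))"
    using local_controllability by blast
  have "bounded ((\<lambda>(x, u). l x u) ` (X \<times> U))"
    using assms(3-5) by (intro compact_imp_bounded compact_continuous_image compact_Times)
  then obtain a where a: "\<And>x u. x \<in> X \<Longrightarrow> u \<in> U \<Longrightarrow> \<bar>l x u\<bar> \<le> a"
    unfolding bounded_iff by force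
  have p: "0 < p"
    using orbit by (simp add: periodic_orbit_def)
  have "steerable_dissipative_orbit f X U l p P lam lbar (\<bar>a\<bar> + \<bar>ell_star f X U l\<bar>) kappa M'"
  proof (unfold_locales)
    fix x u assume "x \<in> X" "u \<in> U" "f x u \<in> X"
    then have "al (orbit_dist p P (x, u)) \<le> l x u - ell_star f X U l + lam x - lam (f x u)"
      using diss by blast
    then show "avg_cost l p P \<le> l x u + lam x - lam (f x u)"
      using Kinf_nonneg[OF al orbit_dist_nonneg[OF p, of P "(x, u)"]] optimal by linarith
  next
    fix x u assume "x \<in> X" "u \<in> U"
    then show "l x u - avg_cost l p P \<le> \<bar>a\<bar> + \<bar>ell_star f X U l\<bar>"
      using a[of x u] optimal by linarith
  next
    fix j x assume "j < p" "x \<in> X" "norm (x - fst (P j)) \<le> kappa"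
    moreover have "fst (P j) \<in> X"
      using orbit \<open>j < p\<close> by (auto simp: periodic_orbit_def mem_Times_iff)
    ultimately show "\<exists>u. admissible f X U M' x u \<and> traj f x u M' = fst (P j)"
      using steer kappa by fastforce
  qed (use orbit lam in auto)
  then show thesis
    using that kappa by blast
qed

theorem lemma25:
  fixes f :: "'x::euclidean_space \<Rightarrow> 'u::euclidean_space \<Rightarrow> 'x"
    and X :: "'x set" and U :: "'u set"
    and l :: "'x \<Rightarrow> 'u \<Rightarrow> real"
    and pstar :: nat and Pstar :: "nat \<Rightarrow> 'x \<times> 'u"
    and uopt :: "nat \<Rightarrow> 'x \<Rightarrow> nat \<Rightarrow> 'u"
    and alpha :: "real \<Rightarrow> real"
  assumes l_nonneg: "\<forall>x\<in>X. \<forall>u\<in>U. l x u \<ge> 0"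
    and Pstar_orbit: "periodic_orbit f X U pstar Pstar"
    and Pstar_opt: "avg_cost l pstar Pstar = ell_star f X U l"
    and A1: "continuous_on (X \<times> U) (\<lambda>(x, u). f x u)" "continuous_on (X \<times> U) (\<lambda>(x, u). l x u)"
            "compact X" "compact U"
    and A3: "\<exists>lam :: 'x \<Rightarrow> real. \<exists>lbar. \<exists>al. Kinf al \<and> (\<forall>x\<in>X. \<bar>lam x\<bar> \<le> lbar) \<and>
              (\<forall>x\<in>X. \<forall>u\<in>U. f x u \<in> X \<longrightarrow>
                 l x u - ell_star f X U l + lam x - lam (f x u) \<ge> al (orbit_dist pstar Pstar (x, u)))"
    and A4: "\<exists>kappa > 0. \<exists>M' :: nat. \<exists>rho. Kinf rho \<and>
              (\<forall>z \<in> fst ` Pstar ` {..<pstar}. \<forall>x\<in>X. \<forall>y\<in>X. norm (x - z) \<le> kappa \<longrightarrow> norm (y - z) \<le> kappa \<longrightarrow>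
                 (\<exists>u. admissible f X U M' x u \<and> traj f x u M' = y \<and>
                    (\<forall>k<M'. orbit_dist pstar Pstar (traj f x u k, u k)
                        \<le> rho (max (orbit_state_dist pstar Pstar x) (orbit_state_dist pstar Pstar y)))))"
    and uopt_min: "\<forall>N x. (\<exists>u. admissible f X U N x u) \<longrightarrow>
              admissible f X U N x (uopt N x) \<and> ereal (Jbeta f l N x (uopt N x)) = Vbeta f X U l N x"
    and alpha: "Kinf alpha"
  shows "\<exists>delta N0. classL delta \<and> N0 > 0 \<and>
    (\<forall>x \<in> Xturn f X U uopt pstar Pstar alpha N0. \<forall>N\<ge>N0.
       Vbeta f X U l (N + 1) x \<le> ereal (real N / real (N + 1)) * Vbeta f X U l N x
            + ereal (ell_star f X U l + delta (real (N + 1)))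
     \<and> Vbeta f X U l N (f x (uopt N x 0)) \<le> Vbeta f X U l N x
            + ereal (real (N + 1) / real N * (ell_star f X U l - l x (uopt N x 0) + delta (real (N + 1)))))"
proof -
  obtain lam lbar L kappa M' where kappa: "0 < kappa"
    and setting: "steerable_dissipative_orbit f X U l pstar Pstar lam lbar L kappa M'"
    using steerable_dissipative_orbit_if_strictly_dissipative[OF Pstar_orbit Pstar_opt A1(2-4) A3 A4] .
  interpret steerable_dissipative_orbit f X U l pstar Pstar lam lbar L kappa M'
    by (rule setting)
  define K where "K = extension_const (1 / alpha kappa)"
  define N0 where "N0 = nat \<lceil>(2 / alpha kappa + 3)\<^sup>2\<rceil>"
  have alpha_kappa: "0 < alpha kappa"
    using Kinf_pos[OF alpha kappa] .
  have "0 < 2 / alpha kappa + 3"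
    using alpha_kappa by (simp add: add_pos_pos)
  then have "0 < N0"
    unfolding N0_def by simp
  moreover have "(2 / alpha kappa + 3)\<^sup>2 \<le> real N" if "N0 \<le> N" for N
    using that unfolding N0_def by (simp add: nat_le_iff ceiling_le_iff)
  moreover have "classL (\<lambda>t. K / sqrt (t + 1))"
    using alpha_kappa by (intro classL_div_sqrt) (simp add: K_def extension_const_nonneg)
  ultimately show ?thesis
    using Vbeta_bounds_on_Xturn[where alpha = alpha, OF uopt_min kappa alpha_kappa] Pstar_opt
    by (intro exI[of _ "\<lambda>t. K / sqrt (t + 1)"] exI[of _ N0]) (simp add: K_def)
qed

end
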